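(* Let $\tau$ be a primitive substitution. Then: (i) every generator of length one is basic; (ii) a generator $(v,ab,w)$ with $v,w\in\mathcal{A}^+$, $a,b\in\mathcal{A}$ is basic if and only if $\tau(a)=va$ and $\tau(b)=bw$; (iii) no generator of length three or more is basic.
   Context: Let $\mathcal{A}$ be a finite nonempty alphabet, $\mathcal{A}^*$ the finite words over $\mathcal{A}$ (including the empty word), $\mathcal{A}^+$ the nonempty words, $|u|$ the length of $u$. A word $u$ is a factor of $v$ if $v=w_1uw_2$ for some words $w_1,w_2$. A substitution is a map $\tau:\mathcal{A}\to\mathcal{A}^+$ extended to a concatenation-respecting map on words. The language $\mathcal{L}(\tau)$ is the set of words that are factors of $\tau^n(a)$ for some letter $a$ and some $n\ge1$. $\tau$ is primitive if there is $n\ge1$ such that every letter $b$ is a factor of $\tau^n(a)$ for every letter $a$, and there is a letter $a$ such that for every $N$ there is $n$ with $|\tau^n(a)|>N$. A generator for $\tau$ is a triple $(v,u,w)$ with $v,u,w\in\mathcal{A}^+$, $u\in\mathcal{L}(\tau)$ and $\tau(u)=vuw$; $v$, $u$, $w$ are its left wing, center and right wing, and its length is $|u|$. If $(v,u,cw)$ is a generator with $c\in\mathcal{A}$, $w\in\mathcal{A}^*$, its right extension is the generator $(v,uc,w\tau(c))$; if $(vc,u,w)$ is a generator with $c\in\mathcal{A}$, $v\in\mathcal{A}^*$, its left extension is the generator $(\tau(c)v,cu,w)$. Two generators $g_1,g_2$ are G related ($g_1\sim_G g_2$) if there is a generator $g_3$ obtainable from $g_1$ and also from $g_2$ by finite (possibly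 empty) sequences of left and right extensions. A generator is basic if it is not G related to any generator of smaller length. *)

theory Defs
  imports Main
begin

definition substitution :: "('a \<Rightarrow> 'a list) \<Rightarrow> bool" where
  "substitution \<tau> \<longleftrightarrow> (\<forall>a. \<tau> a \<noteq> [])"

definition subst_word :: "('a \<Rightarrow> 'a list) \<Rightarrow> 'a list \<Rightarrow> 'a list" where
  "subst_word \<tau> u = concat (map \<tau> u)"

definition factor :: "'a list \<Rightarrow> 'a list \<Rightarrow> bool" where
  "factor u v \<longleftrightarrow> (\<exists>w1 w2. v = w1 @ u @ w2)"

definition lang :: "('a \<Rightarrow> 'a list) \<Rightarrow> 'a list set" where
  "lang \<tau> = {u. \<exists>a n. n \<ge> 1 \<and> factor u ((subst_word \<tau> ^^ n) [a])}"

definition primitive :: "('a \<Rightarrow> 'a list) \<Rightarrow> bool" where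
  "primitive \<tau> \<longleftrightarrow>
     (\<exists>n\<ge>1. \<forall>a b. factor [b] ((subst_word \<tau> ^^ n) [a])) \<and>
     (\<exists>a. \<forall>N. \<exists>n. length ((subst_word \<tau> ^^ n) [a]) > N)"

text \<open>A generator is a triple (v,u,w) = (left wing, center, right wing).\<close>
definition generator :: "('a \<Rightarrow> 'a list) \<Rightarrow> 'a list \<times> 'a list \<times> 'a list \<Rightarrow> bool" where
  "generator \<tau> g \<longleftrightarrow> (case g of (v, u, w) \<Rightarrow>
     v \<noteq> [] \<and> u \<noteq> [] \<and> w \<noteq> [] \<and> u \<in> lang \<tau> \<and> subst_word \<tau> u = v @ u @ w)"

definition ext_step :: "('a \<Rightarrow> 'a list) \<Rightarrow> 'a list \<times> 'a list \<times> 'a list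
    \<Rightarrow> 'a list \<times> 'a list \<times> 'a list \<Rightarrow> bool" where
  "ext_step \<tau> g g' \<longleftrightarrow> generator \<tau> g \<and>
     ((\<exists>v u c w. g = (v, u, c # w) \<and> g' = (v, u @ [c], w @ \<tau> c)) \<or>
      (\<exists>v u c w. g = (v @ [c], u, w) \<and> g' = (\<tau> c @ v, c # u, w)))"

definition G_related :: "('a \<Rightarrow> 'a list) \<Rightarrow> 'a list \<times> 'a list \<times> 'a list
    \<Rightarrow> 'a list \<times> 'a list \<times> 'a list \<Rightarrow> bool" where
  "G_related \<tau> g1 g2 \<longleftrightarrow>
     (\<exists>g3. (ext_step \<tau>)\<^sup>*\<^sup>* g1 g3 \<and> (ext_step \<tau>)\<^sup>*\<^sup>* g2 g3)"

definition basic :: "('a \<Rightarrow> 'a list) \<Rightarrow> 'a list \<times> 'a list \<times> 'a list \<Rightarrow> bool" where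
  "basic \<tau> g \<longleftrightarrow> generator \<tau> g \<and>
     \<not> (\<exists>g'. generator \<tau> g' \<and> G_related \<tau> g g' \<and>
             length (fst (snd g')) < length (fst (snd g)))"

end

theory Submission
  imports Defs
begin

text \<open>Left and right extensions preserve the number of \<^emph>\<open>anchored\<close> letters of a generator
  \<open>(v, u, w)\<close>: those letters \<open>u\<^sub>i\<close> whose occurrence at position \<open>|v| + i\<close> of \<open>vuw = \<tau>(u)\<close> lies
  inside the block \<open>\<tau>(u\<^sub>i)\<close>. Since this number never exceeds the length of the center, a
  generator all of whose letters are anchored is basic; this covers \<open>(v, ab, w)\<close> with
  \<open>\<tau>(a) = va\<close> and \<open>\<tau>(b) = bw\<close>. Conversely, if \<open>\<tau>\<close> of the first letter of the center fits into
  the left wing, the generator is the left extension of a shorter one, and symmetrically on the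
  right. For a basic generator \<open>(v, c m d, w)\<close> both blocks \<open>\<tau>(c)\<close> and \<open>\<tau>(d)\<close> therefore stick
  out of the wings, and counting lengths forces \<open>\<tau>(m) = m\<close>; so for \<open>m \<noteq> []\<close> some letter is
  fixed by \<open>\<tau>\<close>, which primitivity excludes.\<close>

lemma subst_word_Nil [simp]: "subst_word \<tau> [] = []"
  and subst_word_Cons [simp]: "subst_word \<tau> (c # u) = \<tau> c @ subst_word \<tau> u"
  and subst_word_append [simp]: "subst_word \<tau> (u @ u') = subst_word \<tau> u @ subst_word \<tau> u'"
  by (simp_all add: subst_word_def)

lemma length_subst_word_ge:
  assumes "substitution \<tau>"
  shows "length u \<le> length (subst_word \<tau> u)"
proof (induction u)
  case (Cons c u)
  have "\<tau> c \<noteq> []" using assms by (simp add: substitution_def)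
  then show ?case using Cons by (cases "\<tau> c") auto
qed simp

lemma append_eq_append_longer:
  assumes "xs @ ys = zs @ ts" "length zs \<le> length xs"
  shows "\<exists>r. xs = zs @ r \<and> ts = r @ ys"
  using assms by (auto simp: append_eq_append_conv2)

lemma factor_Cons: "factor u (c # u)"
  and factor_snoc: "factor u (u @ [d])"
  unfolding factor_def by (metis append_Cons append_Nil append_Nil2)+

lemma factor_trans: "factor u v \<Longrightarrow> factor v w \<Longrightarrow> factor u w"
  unfolding factor_def by (metis append.assoc)

lemma lang_factor_closed: "u \<in> lang \<tau> \<Longrightarrow> factor u' u \<Longrightarrow> u' \<in> lang \<tau>"
  unfolding lang_def by (auto intro: factor_trans)

lemma primitive_no_fixed_letter:
  assumes "primitive \<tau>"
  shows "\<tau> x \<noteq> [x]"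
proof
  assume fixed: "\<tau> x = [x]"
  have iterate: "(subst_word \<tau> ^^ n) [x] = [x]" for n
    by (induction n) (simp_all add: fixed)
  obtain n where "\<forall>a b. factor [b] ((subst_word \<tau> ^^ n) [a])"
    using assms unfolding primitive_def by blast
  have only_x: "b = x" for b
  proof -
    obtain w1 w2 where "[x] = w1 @ [b] @ w2"
      using \<open>\<forall>a b. factor [b] _\<close> iterate unfolding factor_def by metis
    then show ?thesis by (cases w1) auto
  qed
  obtain a where "\<forall>N. \<exists>n. length ((subst_word \<tau> ^^ n) [a]) > N"
    using assms unfolding primitive_def by blast
  then obtain n where "length ((subst_word \<tau> ^^ n) [a]) > 1" by blast
  then show False using iterate only_x[of a] by simp
qed

lemma subst_word_fixed_imp_fixed_letter:
  assumes "substitution \<tau>" "subst_word \<tau> (x # m) = x # m"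
  shows "\<tau> x = [x]"
proof -
  have split: "\<tau> x @ subst_word \<tau> m = [x] @ m" using assms(2) by simp
  have "0 < length (\<tau> x)" using assms(1) by (simp add: substitution_def)
  moreover have "length m \<le> length (subst_word \<tau> m)" by (rule length_subst_word_ge[OF assms(1)])
  moreover have "length (\<tau> x) + length (subst_word \<tau> m) = 1 + length m"
    using arg_cong[OF split, of length] by simp
  ultimately have "length (\<tau> x) = length [x]" by (simp only: list.size)
  then show ?thesis using split append_eq_append_conv by blast
qed

lemma not_basic_if_extension:
  assumes "ext_step \<tau> g' g"
  shows "\<not> basic \<tau> g"
proof -
  have "generator \<tau> g'" using assms by (simp add: ext_step_def)
  moreover have "G_related \<tau> g g'" using assms unfolding G_related_def by blast
  moreover have "length (fst (snd g')) < length (fst (snd g))"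
    using assms by (auto simp: ext_step_def)
  ultimately show ?thesis unfolding basic_def by blast
qed

lemma not_basic_if_left_reducible:
  assumes gen: "generator \<tau> (v, c # u, w)" and "u \<noteq> []" and "length (\<tau> c) \<le> length v"
  shows "\<not> basic \<tau> (v, c # u, w)"
proof -
  have "v @ c # u @ w = \<tau> c @ subst_word \<tau> u" using gen by (simp add: generator_def)
  then obtain r where r: "v = \<tau> c @ r" "subst_word \<tau> u = r @ c # u @ w"
    using append_eq_append_longer assms(3) by blast
  have "c # u \<in> lang \<tau>" using gen by (simp add: generator_def)
  then have "u \<in> lang \<tau>" using factor_Cons by (rule lang_factor_closed)
  then have "generator \<tau> (r @ [c], u, w)" using r gen \<open>u \<noteq> []\<close> by (simp add: generator_def)
  then have "ext_step \<tau> (r @ [c], u, w) (v, c # u, w)" unfolding ext_step_def r(1) by blast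
  then show ?thesis by (rule not_basic_if_extension)
qed

lemma not_basic_if_right_reducible:
  assumes gen: "generator \<tau> (v, u @ [d], w)" and "u \<noteq> []" and "length (\<tau> d) \<le> length w"
  shows "\<not> basic \<tau> (v, u @ [d], w)"
proof -
  have eq: "subst_word \<tau> u @ \<tau> d = (v @ u @ [d]) @ w" using gen by (simp add: generator_def)
  have "length (subst_word \<tau> u) + length (\<tau> d) = length (v @ u @ [d]) + length w"
    using arg_cong[OF eq, of length] by simp
  then have "length (v @ u @ [d]) \<le> length (subst_word \<tau> u)" using assms(3) by linarith
  then obtain r where r: "subst_word \<tau> u = v @ u @ d # r" "w = r @ \<tau> d"
    using append_eq_append_longer[OF eq] by auto
  have "u @ [d] \<in> lang \<tau>" using gen by (simp add: generator_def)
  then have "u \<in> lang \<tau>" using factor_snoc by (rule lang_factor_closed)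
  then have "generator \<tau> (v, u, d # r)" using r gen \<open>u \<noteq> []\<close> by (simp add: generator_def)
  then have "ext_step \<tau> (v, u, d # r) (v, u @ [d], w)" unfolding ext_step_def r(2) by blast
  then show ?thesis by (rule not_basic_if_extension)
qed

text \<open>\<open>anchor_count \<tau> k u\<close> counts the letters \<open>u\<^sub>i\<close> of \<open>u\<close> such that position \<open>k + i\<close> of
  \<open>\<tau>(u)\<close> lies in the block \<open>\<tau>(u\<^sub>i)\<close>; the offset is kept relative to the current block, so
  it may become negative.\<close>

fun anchor_count :: "('a \<Rightarrow> 'a list) \<Rightarrow> int \<Rightarrow> 'a list \<Rightarrow> nat" where
  "anchor_count \<tau> k [] = 0"
| "anchor_count \<tau> k (c # u) = (if 0 \<le> k \<and> k < int (length (\<tau> c)) then 1 else 0)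
     + anchor_count \<tau> (k + 1 - int (length (\<tau> c))) u"

fun generator_anchors :: "('a \<Rightarrow> 'a list) \<Rightarrow> 'a list \<times> 'a list \<times> 'a list \<Rightarrow> nat" where
  "generator_anchors \<tau> (v, u, w) = anchor_count \<tau> (int (length v)) u"

lemma anchor_count_le_length: "anchor_count \<tau> k u \<le> length u"
  by (induction u arbitrary: k) (simp_all add: le_SucI)

lemma anchor_count_snoc:
  "anchor_count \<tau> k (u @ [c]) = anchor_count \<tau> k u +
     (let j = k + int (length u) - int (length (subst_word \<tau> u))
      in if 0 \<le> j \<and> j < int (length (\<tau> c)) then 1 else 0)"
  by (induction u arbitrary: k) (auto simp: algebra_simps Let_def)

lemma ext_step_generator_anchors:
  assumes "ext_step \<tau> g g'"
  shows "generator_anchors \<tau> g' = generator_anchors \<tau> g"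
proof -
  have gen: "generator \<tau> g" using assms by (simp add: ext_step_def)
  from assms consider (right) v u c w where "g = (v, u, c # w)" "g' = (v, u @ [c], w @ \<tau> c)"
    | (left) v u c w where "g = (v @ [c], u, w)" "g' = (\<tau> c @ v, c # u, w)"
    by (auto simp: ext_step_def)
  then show ?thesis
  proof cases
    case right
    then have "length (subst_word \<tau> u) = length v + length u + Suc (length w)"
      using gen by (simp add: generator_def)
    then show ?thesis using right by (simp add: anchor_count_snoc)
  next
    case left
    then show ?thesis by (simp add: algebra_simps)
  qed
qed

lemma G_related_generator_anchors:
  assumes "G_related \<tau> g g'"
  shows "generator_anchors \<tau> g = generator_anchors \<tau> g'"
proof -
  have "generator_anchors \<tau> h' = generator_anchors \<tau> h" if "(ext_step \<tau>)\<^sup>*\<^sup>* h h'" for h h'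
    using that by (induction rule: rtranclp_induct) (auto dest: ext_step_generator_anchors)
  then show ?thesis using assms unfolding G_related_def by metis
qed

lemma basic_if_all_anchored:
  assumes gen: "generator \<tau> (v, u, w)" and all: "anchor_count \<tau> (int (length v)) u = length u"
  shows "basic \<tau> (v, u, w)"
  unfolding basic_def
proof (intro conjI gen notI)
  assume "\<exists>g'. generator \<tau> g' \<and> G_related \<tau> (v, u, w) g' \<and>
      length (fst (snd g')) < length (fst (snd (v, u, w)))"
  then obtain v' u' w' where g': "G_related \<tau> (v, u, w) (v', u', w')" "length u' < length u"
    by auto
  have "length u = anchor_count \<tau> (int (length v')) u'"
    using G_related_generator_anchors[OF g'(1)] all by simp
  also have "\<dots> \<le> length u'" by (rule anchor_count_le_length)
  finally show False using g'(2) by simp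
qed

lemma basic_two_letter_iff:
  assumes gen: "generator \<tau> (v, [a, b], w)"
  shows "basic \<tau> (v, [a, b], w) \<longleftrightarrow> \<tau> a = v @ [a] \<and> \<tau> b = b # w"
proof
  assume "\<tau> a = v @ [a] \<and> \<tau> b = b # w"
  then show "basic \<tau> (v, [a, b], w)" using gen by (intro basic_if_all_anchored) simp_all
next
  assume bas: "basic \<tau> (v, [a, b], w)"
  have "length v < length (\<tau> a)"
    using not_basic_if_left_reducible[of \<tau> v a "[b]" w] gen bas by fastforce
  moreover have "length w < length (\<tau> b)"
    using not_basic_if_right_reducible[of \<tau> v "[a]" b w] gen bas by fastforce
  moreover have eq: "\<tau> a @ \<tau> b = (v @ [a]) @ (b # w)" using gen by (simp add: generator_def)
  moreover have "length (\<tau> a) + length (\<tau> b) = length v + length w + 2"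
    using arg_cong[OF eq, of length] by simp
  ultimately have "length (\<tau> a) = length (v @ [a])" by simp
  then show "\<tau> a = v @ [a] \<and> \<tau> b = b # w" using eq append_eq_append_conv by blast
qed

lemma not_basic_if_three_le_length:
  assumes sub: "substitution \<tau>" and prim: "primitive \<tau>"
    and gen: "generator \<tau> (v, u, w)" and len: "3 \<le> length u"
  shows "\<not> basic \<tau> (v, u, w)"
proof
  assume bas: "basic \<tau> (v, u, w)"
  obtain c u' where "u = c # u'" using len by (cases u) auto
  moreover obtain m d where "u' = m @ [d]" using len \<open>u = c # u'\<close> by (cases u' rule: rev_cases) auto
  ultimately have u: "u = c # m @ [d]" by simp
  then obtain x m' where m: "m = x # m'" using len by (cases m) auto
  have "length v < length (\<tau> c)"
    using not_basic_if_left_reducible[of \<tau> v c "m @ [d]" w] gen bas u by fastforce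
  moreover have "length w < length (\<tau> d)"
    using not_basic_if_right_reducible[of \<tau> v "c # m" d w] gen bas u by fastforce
  moreover have "length m \<le> length (subst_word \<tau> m)" by (rule length_subst_word_ge[OF sub])
  moreover have eq: "\<tau> c @ subst_word \<tau> m @ \<tau> d = (v @ [c]) @ m @ (d # w)"
    using gen u by (simp add: generator_def)
  moreover have "length (\<tau> c) + length (subst_word \<tau> m) + length (\<tau> d)
      = length v + length m + length w + 2"
    using arg_cong[OF eq, of length] by simp
  ultimately have "length (\<tau> c) = length (v @ [c])" "length (subst_word \<tau> m) = length m"
    by simp_all
  then have "subst_word \<tau> m = m"
    using eq append_eq_append_conv[OF disjI1] by (metis (no_types, lifting))
  then have "\<tau> x = [x]" using subst_word_fixed_imp_fixed_letter[OF sub] m by simp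
  with primitive_no_fixed_letter[OF prim] show False by simp
qed

theorem mainTheorem3:
  fixes \<tau> :: "'a::finite \<Rightarrow> 'a list"
  assumes "substitution \<tau>" and "primitive \<tau>"
  shows "(\<forall>v u w. generator \<tau> (v, u, w) \<and> length u = 1 \<longrightarrow> basic \<tau> (v, u, w))
       \<and> (\<forall>v a b w. v \<noteq> [] \<and> w \<noteq> [] \<and> generator \<tau> (v, [a, b], w) \<longrightarrow>
            (basic \<tau> (v, [a, b], w) \<longleftrightarrow> \<tau> a = v @ [a] \<and> \<tau> b = b # w))
       \<and> (\<forall>v u w. generator \<tau> (v, u, w) \<and> length u \<ge> 3 \<longrightarrow> \<not> basic \<tau> (v, u, w))"
proof (intro conjI allI impI)
  fix v u w
  assume "generator \<tau> (v, u, w) \<and> length u = 1"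
  then show "basic \<tau> (v, u, w)" by (auto simp: basic_def generator_def)
next
  fix v a b w
  assume "v \<noteq> [] \<and> w \<noteq> [] \<and> generator \<tau> (v, [a, b], w)"
  then show "basic \<tau> (v, [a, b], w) \<longleftrightarrow> \<tau> a = v @ [a] \<and> \<tau> b = b # w"
    by (simp add: basic_two_letter_iff)
next
  fix v u w
  assume "generator \<tau> (v, u, w) \<and> 3 \<le> length u"
  then show "\<not> basic \<tau> (v, u, w)" using not_basic_if_three_le_length[OF assms] by simp
qed

end
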